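(* For every facility placement profile $\mathbf{s}$ and every client $v$ with $N_{\mathbf{s}}(v)\neq\varnothing$, the client $v$ belongs to $V_j$ where $j=\min\{i: F_i\cap N_{\mathbf{s}}(v)\neq\varnothing\}$.
   Context: Setting: a finite directed graph $H=(V,E,w)$ with vertex weights $w:V\to\mathbb{Q}_{>0}$ (vertices are clients), $w(X)=\sum_{v\in X}w(v)$, a finite set $F$ of facility agents, and a facility placement profile $\mathbf{s}=(s_f)_{f\in F}$ with $s_f\in V$. For $v\in V$ let $N(v)=\{v\}\cup\{u:(v,u)\in E\}$, $N_{\mathbf{s}}(v)=\{f\in F:s_f\in N(v)\}$, $A_{\mathbf{s}}(f)=\{v\in V: f\in N_{\mathbf{s}}(v)\}$ and $A_{\mathbf{s}}(T)=\bigcup_{f\in T}A_{\mathbf{s}}(f)$ for $T\subseteq F$. For nonempty $F^*\subseteq F$ and $V^*\subseteq V$, the minimum neighborhood set $\mathrm{MNS}_{\mathbf{s}}(F^*,V^* )$ is the (unique) subset of $F^*$ of largest cardinality among the nonempty $T\subseteq F^*$ minimizing $\frac{w(A_{\mathbf{s}}(T)\cap V^* )}{|T|}$. The class set is defined inductively: for $i\ge1$, while $F\setminus\bigcup_{j<i}F_j\neq\varnothing$, let $F_i=\mathrm{MNS}_{\mathbf{s}}\big(F\setminus\bigcup_{j<i}F_j,\ V\setminus\bigcup_{j<i}V_j\big)$ and $V_i=A_{\mathbf{s}}(F_i)\setminus\bigcup_{j<i}V_j$; the class is $C_i=(F_i,V_i)$. *)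

theory Defs
  imports Complex_Main
begin

definition nbh :: "('v \<times> 'v) set \<Rightarrow> 'v \<Rightarrow> 'v set" where
  "nbh E v = {v} \<union> {u. (v, u) \<in> E}"

definition Ns :: "('v \<times> 'v) set \<Rightarrow> 'f set \<Rightarrow> ('f \<Rightarrow> 'v) \<Rightarrow> 'v \<Rightarrow> 'f set" where
  "Ns E F s v = {f \<in> F. s f \<in> nbh E v}"

definition Af :: "'v set \<Rightarrow> ('v \<times> 'v) set \<Rightarrow> 'f set \<Rightarrow> ('f \<Rightarrow> 'v) \<Rightarrow> 'f \<Rightarrow> 'v set" where
  "Af V E F s f = {v \<in> V. f \<in> Ns E F s v}"

definition AT :: "'v set \<Rightarrow> ('v \<times> 'v) set \<Rightarrow> 'f set \<Rightarrow> ('f \<Rightarrow> 'v) \<Rightarrow> 'f set \<Rightarrow> 'v set" where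
  "AT V E F s T = (\<Union>f\<in>T. Af V E F s f)"

definition wt :: "('v \<Rightarrow> rat) \<Rightarrow> 'v set \<Rightarrow> rat" where
  "wt w X = (\<Sum>v\<in>X. w v)"

definition ratio :: "'v set \<Rightarrow> ('v \<times> 'v) set \<Rightarrow> ('v \<Rightarrow> rat) \<Rightarrow> 'f set \<Rightarrow> ('f \<Rightarrow> 'v)
    \<Rightarrow> 'v set \<Rightarrow> 'f set \<Rightarrow> rat" where
  "ratio V E w F s Vs T = wt w (AT V E F s T \<inter> Vs) / of_nat (card T)"

definition is_minimizer :: "'v set \<Rightarrow> ('v \<times> 'v) set \<Rightarrow> ('v \<Rightarrow> rat) \<Rightarrow> 'f set \<Rightarrow> ('f \<Rightarrow> 'v)
    \<Rightarrow> 'f set \<Rightarrow> 'v set \<Rightarrow> 'f set \<Rightarrow> bool" where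
  "is_minimizer V E w F s Fs Vs T \<longleftrightarrow>
     T \<subseteq> Fs \<and> T \<noteq> {} \<and>
     (\<forall>T'. T' \<subseteq> Fs \<and> T' \<noteq> {} \<longrightarrow> ratio V E w F s Vs T \<le> ratio V E w F s Vs T')"

definition MNS :: "'v set \<Rightarrow> ('v \<times> 'v) set \<Rightarrow> ('v \<Rightarrow> rat) \<Rightarrow> 'f set \<Rightarrow> ('f \<Rightarrow> 'v)
    \<Rightarrow> 'f set \<Rightarrow> 'v set \<Rightarrow> 'f set" where
  "MNS V E w F s Fs Vs = (THE T. is_minimizer V E w F s Fs Vs T \<and>
      (\<forall>T'. is_minimizer V E w F s Fs Vs T' \<longrightarrow> card T' \<le> card T))"

(* used V E w F s i = (F_1 \<union> ... \<union> F_i, V_1 \<union> ... \<union> V_i)  (as long as classes exist) *)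
primrec used :: "'v set \<Rightarrow> ('v \<times> 'v) set \<Rightarrow> ('v \<Rightarrow> rat) \<Rightarrow> 'f set \<Rightarrow> ('f \<Rightarrow> 'v)
    \<Rightarrow> nat \<Rightarrow> 'f set \<times> 'v set" where
  "used V E w F s 0 = ({}, {})"
| "used V E w F s (Suc i) =
     (let UF = fst (used V E w F s i); UV = snd (used V E w F s i) in
      if F - UF = {} then (UF, UV)
      else (let Fi = MNS V E w F s (F - UF) (V - UV)
            in (UF \<union> Fi, UV \<union> (AT V E F s Fi - UV))))"

definition class_exists :: "'v set \<Rightarrow> ('v \<times> 'v) set \<Rightarrow> ('v \<Rightarrow> rat) \<Rightarrow> 'f set \<Rightarrow> ('f \<Rightarrow> 'v)
    \<Rightarrow> nat \<Rightarrow> bool" where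
  "class_exists V E w F s i \<longleftrightarrow> 1 \<le> i \<and> F - fst (used V E w F s (i - 1)) \<noteq> {}"

definition classF :: "'v set \<Rightarrow> ('v \<times> 'v) set \<Rightarrow> ('v \<Rightarrow> rat) \<Rightarrow> 'f set \<Rightarrow> ('f \<Rightarrow> 'v)
    \<Rightarrow> nat \<Rightarrow> 'f set" where
  "classF V E w F s i = MNS V E w F s (F - fst (used V E w F s (i - 1)))
                                    (V - snd (used V E w F s (i - 1)))"

definition classV :: "'v set \<Rightarrow> ('v \<times> 'v) set \<Rightarrow> ('v \<Rightarrow> rat) \<Rightarrow> 'f set \<Rightarrow> ('f \<Rightarrow> 'v)
    \<Rightarrow> nat \<Rightarrow> 'v set" where
  "classV V E w F s i = AT V E F s (classF V E w F s i) - snd (used V E w F s (i - 1))"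

end

theory Submission
  imports Defs
begin

(* The coverage weight T \<mapsto> w(V\<^sup>* \<inter> A_s(T)) is submodular, so the minimizers of the ratio
   w(V\<^sup>* \<inter> A_s(T)) / |T| are closed under union: MNS is the greatest minimizer, a nonempty
   subset of the remaining facilities, and the classes exhaust F after at most |F| rounds.
   The clients V_1, ..., V_{j-1} are covered by F_1, ..., F_{j-1}.  If F_j is the first class
   containing a facility adjacent to v, then v is covered by F_j but by no earlier class,
   hence v \<in> V_j. *)

lemma mem_AT_iff: "x \<in> AT V E F s T \<longleftrightarrow> x \<in> V \<and> T \<inter> Ns E F s x \<noteq> {}"
  unfolding AT_def Af_def by auto

lemma AT_subset: "AT V E F s T \<subseteq> V"
  unfolding AT_def Af_def by auto

lemma AT_Un: "AT V E F s (A \<union> B) = AT V E F s A \<union> AT V E F s B"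
  unfolding AT_def by auto

lemma AT_Int_subset: "AT V E F s (A \<inter> B) \<subseteq> AT V E F s A \<inter> AT V E F s B"
  unfolding AT_def by auto

lemma AT_empty [simp]: "AT V E F s {} = {}"
  unfolding AT_def by auto

lemma wt_AT_submodular:
  assumes "finite V" and "\<forall>u\<in>V. 0 \<le> w u"
  shows "wt w (AT V E F s (A \<union> B) \<inter> Vs) + wt w (AT V E F s (A \<inter> B) \<inter> Vs)
           \<le> wt w (AT V E F s A \<inter> Vs) + wt w (AT V E F s B \<inter> Vs)"
proof -
  let ?A = "AT V E F s A \<inter> Vs" and ?B = "AT V E F s B \<inter> Vs"
  have fin: "finite (AT V E F s T \<inter> Vs)" for T
    using finite_subset[OF AT_subset assms(1)] by blast
  have "AT V E F s (A \<union> B) \<inter> Vs = ?A \<union> ?B"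
    by (simp add: AT_Un Int_Un_distrib2)
  then have "wt w (AT V E F s (A \<union> B) \<inter> Vs) + wt w (?A \<inter> ?B) = wt w ?A + wt w ?B"
    unfolding wt_def by (simp add: sum.union_inter[OF fin fin])
  moreover have "wt w (AT V E F s (A \<inter> B) \<inter> Vs) \<le> wt w (?A \<inter> ?B)"
    unfolding wt_def
  proof (rule sum_mono2)
    show "AT V E F s (A \<inter> B) \<inter> Vs \<subseteq> ?A \<inter> ?B"
      using AT_Int_subset[of V E F s A B] by blast
    show "0 \<le> w u" if "u \<in> ?A \<inter> ?B - AT V E F s (A \<inter> B) \<inter> Vs" for u
      using that AT_subset[of V E F s A] assms(2) by blast
  qed (simp add: fin)
  ultimately show ?thesis by linarith
qed

lemma is_minimizer_Un:
  assumes "finite V" and "\<forall>u\<in>V. 0 \<le> w u" and "finite Fs"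
    and min1: "is_minimizer V E w F s Fs Vs T1" and min2: "is_minimizer V E w F s Fs Vs T2"
  shows "is_minimizer V E w F s Fs Vs (T1 \<union> T2)"
proof -
  let ?g = "\<lambda>T. wt w (AT V E F s T \<inter> Vs)"
  define r where "r = ratio V E w F s Vs T1"
  have sub: "T1 \<subseteq> Fs" "T2 \<subseteq> Fs" and ne: "T1 \<noteq> {}" "T2 \<noteq> {}"
    using min1 min2 unfolding is_minimizer_def by auto
  have fin: "finite T1" "finite T2"
    using sub \<open>finite Fs\<close> finite_subset by auto
  have r_le: "r \<le> ratio V E w F s Vs T" if "T \<subseteq> Fs" "T \<noteq> {}" for T
    using min1 that unfolding is_minimizer_def r_def by blast
  have card_pos: "0 < card T" if "T \<subseteq> Fs" "T \<noteq> {}" for T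
    using that \<open>finite Fs\<close> by (simp add: card_gt_0_iff finite_subset)
  have g_eq: "?g T = ratio V E w F s Vs T * of_nat (card T)" if "T \<subseteq> Fs" "T \<noteq> {}" for T
    using card_pos[OF that] unfolding ratio_def by simp
  have below: "r * of_nat (card T) \<le> ?g T" if "T \<subseteq> Fs" for T
  proof (cases "T = {}")
    case False
    with that show ?thesis
      using g_eq r_le by (simp add: mult_right_mono)
  qed (simp add: wt_def)
  have "ratio V E w F s Vs T2 \<le> r"
    using min2 sub(1) ne(1) unfolding is_minimizer_def r_def by blast
  with r_le[OF sub(2) ne(2)] have "ratio V E w F s Vs T2 = r"
    by (rule antisym[rotated])
  then have at: "?g T1 = r * of_nat (card T1)" "?g T2 = r * of_nat (card T2)"
    using g_eq sub ne unfolding r_def by simp_all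
  have "r * of_nat (card T1) + r * of_nat (card T2)
      = r * of_nat (card (T1 \<union> T2)) + r * of_nat (card (T1 \<inter> T2))"
    by (simp add: card_Un_Int[OF fin] flip: distrib_left of_nat_add)
  moreover have "r * of_nat (card (T1 \<inter> T2)) \<le> ?g (T1 \<inter> T2)"
    using sub by (intro below) auto
  ultimately have "?g (T1 \<union> T2) \<le> r * of_nat (card (T1 \<union> T2))"
    using wt_AT_submodular[OF assms(1,2), of E F s T1 T2 Vs] at by linarith
  moreover have "0 < card (T1 \<union> T2)"
    using fin ne by auto
  ultimately have "ratio V E w F s Vs (T1 \<union> T2) \<le> r"
    unfolding ratio_def by (simp add: pos_divide_le_eq mult.commute)
  with sub ne r_le show ?thesis
    unfolding is_minimizer_def by (blast intro: order_trans)
qed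

lemma is_minimizer_exists:
  assumes "finite Fs" and "Fs \<noteq> {}"
  shows "\<exists>T. is_minimizer V E w F s Fs Vs T"
proof -
  let ?S = "{T. T \<subseteq> Fs \<and> T \<noteq> {}}"
  let ?T = "arg_min_on (ratio V E w F s Vs) ?S"
  have fin: "finite ?S"
    using assms(1) by simp
  have ne: "?S \<noteq> {}"
    using assms(2) by blast
  have "?T \<in> ?S"
    by (rule arg_min_if_finite(1)[OF fin ne])
  moreover have "ratio V E w F s Vs ?T \<le> ratio V E w F s Vs T" if "T \<in> ?S" for T
    by (rule arg_min_least[OF fin ne that])
  ultimately have "is_minimizer V E w F s Fs Vs ?T"
    unfolding is_minimizer_def by blast
  then show ?thesis ..
qed

lemma greatest_minimizer_exists:
  assumes "finite V" and "\<forall>u\<in>V. 0 \<le> w u" and "finite Fs" and "Fs \<noteq> {}"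
  obtains T where "is_minimizer V E w F s Fs Vs T"
    and "\<And>T'. is_minimizer V E w F s Fs Vs T' \<Longrightarrow> T' \<subseteq> T"
proof -
  let ?M = "{T. is_minimizer V E w F s Fs Vs T}"
  have "finite ?M"
    by (rule finite_subset[of _ "Pow Fs"]) (use \<open>finite Fs\<close> in \<open>auto simp: is_minimizer_def\<close>)
  moreover have "?M \<noteq> {}"
    using is_minimizer_exists[OF assms(3,4)] by blast
  ultimately obtain T where T: "T \<in> ?M" and maximal: "\<forall>T'\<in>?M. T \<subseteq> T' \<longrightarrow> T = T'"
    using finite_has_maximal by blast
  have "T' \<subseteq> T" if "T' \<in> ?M" for T'
  proof -
    have "T \<union> T' \<in> ?M"
      using is_minimizer_Un[OF assms(1-3)] T that by simp
    with maximal have "T = T \<union> T'"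
      by blast
    then show ?thesis by blast
  qed
  with T that show thesis
    by simp
qed

lemma MNS_is_minimizer:
  assumes "finite V" and "\<forall>u\<in>V. 0 \<le> w u" and "finite Fs" and "Fs \<noteq> {}"
  shows "is_minimizer V E w F s Fs Vs (MNS V E w F s Fs Vs)"
proof -
  obtain T where T: "is_minimizer V E w F s Fs Vs T"
    and greatest: "\<And>T'. is_minimizer V E w F s Fs Vs T' \<Longrightarrow> T' \<subseteq> T"
    by (rule greatest_minimizer_exists[OF assms]) blast
  have fin: "finite T"
    using T \<open>finite Fs\<close> finite_subset unfolding is_minimizer_def by blast
  have "MNS V E w F s Fs Vs = T"
    unfolding MNS_def
  proof (rule the_equality)
    show "is_minimizer V E w F s Fs Vs T \<and>
        (\<forall>T'. is_minimizer V E w F s Fs Vs T' \<longrightarrow> card T' \<le> card T)"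
      using T greatest fin by (auto intro: card_mono)
    show "T' = T" if "is_minimizer V E w F s Fs Vs T' \<and>
        (\<forall>T''. is_minimizer V E w F s Fs Vs T'' \<longrightarrow> card T'' \<le> card T')" for T'
    proof (rule card_seteq[OF fin])
      show "T' \<subseteq> T" "card T \<le> card T'"
        using that T greatest by auto
    qed
  qed
  with T show ?thesis by simp
qed

lemma used_Suc_exhausted:
  assumes "F \<subseteq> fst (used V E w F s i)"
  shows "used V E w F s (Suc i) = used V E w F s i"
  using assms by (simp add: Let_def)

lemma used_Suc_class:
  assumes "class_exists V E w F s (Suc i)"
  shows "used V E w F s (Suc i) =
    (fst (used V E w F s i) \<union> classF V E w F s (Suc i),
     snd (used V E w F s i) \<union> classV V E w F s (Suc i))"
  using assms unfolding class_exists_def classF_def classV_def by (simp add: Let_def)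

declare used.simps(2) [simp del]

lemma class_exists_Suc_iff: "class_exists V E w F s (Suc i) \<longleftrightarrow> \<not> F \<subseteq> fst (used V E w F s i)"
  unfolding class_exists_def by simp

lemma snd_used_subset_AT: "snd (used V E w F s i) \<subseteq> AT V E F s (fst (used V E w F s i))"
proof (induction i)
  case (Suc i)
  show ?case
  proof (cases "class_exists V E w F s (Suc i)")
    case True
    have "classV V E w F s (Suc i) \<subseteq> AT V E F s (classF V E w F s (Suc i))"
      unfolding classV_def by blast
    with Suc.IH show ?thesis
      unfolding used_Suc_class[OF True] by (auto simp: AT_Un)
  next
    case False
    with Suc.IH show ?thesis
      by (simp add: class_exists_Suc_iff used_Suc_exhausted)
  qed
qed simp

context
  fixes V :: "'v set" and E :: "('v \<times> 'v) set" and w :: "'v \<Rightarrow> rat"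
    and F :: "'f set" and s :: "'f \<Rightarrow> 'v"
  assumes finite_V: "finite V" and nonneg: "\<forall>u\<in>V. 0 \<le> w u" and finite_F: "finite F"
begin

lemma classF_is_minimizer:
  assumes "class_exists V E w F s i"
  shows "is_minimizer V E w F s (F - fst (used V E w F s (i - 1)))
           (V - snd (used V E w F s (i - 1))) (classF V E w F s i)"
proof -
  have "F - fst (used V E w F s (i - 1)) \<noteq> {}"
    using assms unfolding class_exists_def by blast
  then show ?thesis
    unfolding classF_def using finite_F by (intro MNS_is_minimizer[OF finite_V nonneg]) auto
qed

lemma classF_nonempty: "class_exists V E w F s i \<Longrightarrow> classF V E w F s i \<noteq> {}"
  using classF_is_minimizer unfolding is_minimizer_def by blast

lemma classF_subset:
  "class_exists V E w F s i \<Longrightarrow> classF V E w F s i \<subseteq> F - fst (used V E w F s (i - 1))"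
  using classF_is_minimizer unfolding is_minimizer_def by blast

lemma fst_used_subset: "fst (used V E w F s i) \<subseteq> F"
proof (induction i)
  case (Suc i)
  show ?case
  proof (cases "class_exists V E w F s (Suc i)")
    case True
    with Suc.IH classF_subset[OF True] show ?thesis
      by (auto simp: used_Suc_class[OF True])
  next
    case False
    with Suc.IH show ?thesis
      by (simp add: class_exists_Suc_iff used_Suc_exhausted)
  qed
qed simp

lemma card_fst_used: "fst (used V E w F s i) = F \<or> i \<le> card (fst (used V E w F s i))"
proof (induction i)
  case (Suc i)
  show ?case
  proof (cases "class_exists V E w F s (Suc i)")
    case True
    let ?U = "fst (used V E w F s i)" and ?C = "classF V E w F s (Suc i)"
    have "?U \<subset> ?U \<union> ?C"
      using classF_nonempty[OF True] classF_subset[OF True] by auto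
    moreover have "finite (?U \<union> ?C)"
      using finite_subset[OF fst_used_subset[of "Suc i"] finite_F]
      unfolding used_Suc_class[OF True] by simp
    ultimately have "card ?U < card (?U \<union> ?C)"
      by (intro psubset_card_mono)
    moreover have "?U \<noteq> F"
      using True unfolding class_exists_Suc_iff by blast
    ultimately have "Suc i \<le> card (?U \<union> ?C)"
      using Suc.IH by auto
    then show ?thesis
      unfolding used_Suc_class[OF True] by simp
  next
    case False
    then have "F \<subseteq> fst (used V E w F s i)"
      unfolding class_exists_Suc_iff by blast
    with fst_used_subset[of i] show ?thesis
      by (simp add: used_Suc_exhausted)
  qed
qed simp

lemma fst_used_card_F: "fst (used V E w F s (card F)) = F"
  using card_fst_used[of "card F"] fst_used_subset[of "card F"] card_seteq[OF finite_F] by blast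

lemma first_class_meeting:
  assumes "X \<subseteq> F" and "X \<noteq> {}"
  obtains j where "class_exists V E w F s j" and "classF V E w F s j \<inter> X \<noteq> {}"
    and "\<forall>i. class_exists V E w F s i \<and> classF V E w F s i \<inter> X \<noteq> {} \<longrightarrow> j \<le> i"
    and "fst (used V E w F s (j - 1)) \<inter> X = {}"
proof -
  let ?U = "\<lambda>i. fst (used V E w F s i)"
  have "\<exists>n. ?U n \<inter> X \<noteq> {}"
    using assms by (intro exI[of _ "card F"]) (simp add: fst_used_card_F Int_absorb1)
  define n where "n = (LEAST n. ?U n \<inter> X \<noteq> {})"
  have hit: "?U n \<inter> X \<noteq> {}"
    unfolding n_def by (rule LeastI_ex) fact
  have miss: "?U m \<inter> X = {}" if "m < n" for m
    using that not_less_Least unfolding n_def by blast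
  obtain k where n: "n = Suc k"
    using hit by (cases n) auto
  have k_miss: "?U k \<inter> X = {}"
    using miss n by simp
  have k_exists: "class_exists V E w F s (Suc k)"
  proof (rule ccontr)
    assume "\<not> class_exists V E w F s (Suc k)"
    then have "used V E w F s (Suc k) = used V E w F s k"
      by (simp add: class_exists_Suc_iff used_Suc_exhausted)
    with hit k_miss n show False by simp
  qed
  have "classF V E w F s (Suc k) \<inter> X \<noteq> {}"
    using hit k_miss unfolding n used_Suc_class[OF k_exists] by auto
  moreover have "Suc k \<le> i"
    if i_exists: "class_exists V E w F s i" and i_hit: "classF V E w F s i \<inter> X \<noteq> {}" for i
  proof -
    obtain m where i: "i = Suc m"
      using i_exists unfolding class_exists_def by (cases i) auto
    have "?U i \<inter> X \<noteq> {}"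
      using i_hit unfolding i used_Suc_class[OF i_exists[unfolded i]] by auto
    with miss n show ?thesis
      by (meson not_less)
  qed
  ultimately show thesis
    using that[OF k_exists] k_miss by auto
qed

end

theorem mainTheorem7:
  fixes V :: "'v set" and E :: "('v \<times> 'v) set" and w :: "'v \<Rightarrow> rat"
    and F :: "'f set" and s :: "'f \<Rightarrow> 'v" and v :: 'v
  assumes "finite V" and "E \<subseteq> V \<times> V" and "\<forall>u\<in>V. w u > 0"
    and "finite F" and "\<forall>f\<in>F. s f \<in> V"
    and "v \<in> V" and "Ns E F s v \<noteq> {}"
  shows "\<exists>j. class_exists V E w F s j \<and> classF V E w F s j \<inter> Ns E F s v \<noteq> {}
           \<and> (\<forall>i. class_exists V E w F s i \<and> classF V E w F s i \<inter> Ns E F s v \<noteq> {} \<longrightarrow> j \<le> i)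
           \<and> v \<in> classV V E w F s j"
proof -
  have nonneg: "\<forall>u\<in>V. 0 \<le> w u"
    using assms(3) by (auto intro: less_imp_le)
  have Ns_subset: "Ns E F s v \<subseteq> F"
    unfolding Ns_def by blast
  obtain j where j_exists: "class_exists V E w F s j"
    and j_hit: "classF V E w F s j \<inter> Ns E F s v \<noteq> {}"
    and j_first: "\<forall>i. class_exists V E w F s i \<and> classF V E w F s i \<inter> Ns E F s v \<noteq> {} \<longrightarrow> j \<le> i"
    and earlier_miss: "fst (used V E w F s (j - 1)) \<inter> Ns E F s v = {}"
    by (rule first_class_meeting[OF assms(1) nonneg assms(4) Ns_subset assms(7)])
  have "v \<in> AT V E F s (classF V E w F s j)"
    using j_hit assms(6) by (simp add: mem_AT_iff)
  moreover have "v \<notin> snd (used V E w F s (j - 1))"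
  proof
    assume "v \<in> snd (used V E w F s (j - 1))"
    then have "v \<in> AT V E F s (fst (used V E w F s (j - 1)))"
      using snd_used_subset_AT[of V E w F s "j - 1"] by blast
    with earlier_miss show False
      by (simp add: mem_AT_iff)
  qed
  ultimately have "v \<in> classV V E w F s j"
    unfolding classV_def by blast
  with j_exists j_hit j_first show ?thesis
    by blast
qed

end
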